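(* Let $X$ be an $n\times n$ Boolean matrix with $X=X^*$, let $i\in\{1,\dots,n\}$, and let $\Delta X$ be an $n\times n$ Boolean matrix that is $i$-transitive and $i$-complete with respect to $X$. Then $$X+\Delta X=(X+I_{\Delta X,i}+J_{\Delta X,i})^2.$$
   Context: Boolean matrices have entries in $\{0,1\}$. $+$ is the entrywise OR and the product is the Boolean product. $X^*=\sum_{k\ge0}X^k$ with $X^0=I_n$ is the Kleene closure. For a Boolean matrix $M$, $I_{M,i}$ denotes the matrix equal to $M$ in row $i$ and zero elsewhere, and $J_{M,i}$ denotes the matrix equal to $M$ in column $i$ and zero elsewhere. $\Delta X$ is $i$-transitive with respect to $X$ if $I_{\Delta X,i}=I_{\Delta X,i}\cdot X$ and $J_{\Delta X,i}=X\cdot J_{\Delta X,i}$. $\Delta X$ is $i$-complete with respect to $X$ if $\Delta X=J_{\Delta X,i}\cdot I_{\Delta X,i}+X\cdot I_{\Delta X,i}+J_{\Delta X,i}\cdot X$. *)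

theory Defs
  imports Main
begin

text \<open>n x n Boolean matrices, indexed by a finite type 'n (with CARD('n) = n).\<close>
type_synonym 'n bmat = "'n \<Rightarrow> 'n \<Rightarrow> bool"

definition bplus :: "'n bmat \<Rightarrow> 'n bmat \<Rightarrow> 'n bmat" (infixl "\<oplus>\<^sub>B" 65) where
  "A \<oplus>\<^sub>B B = (\<lambda>r c. A r c \<or> B r c)"

definition btimes :: "'n bmat \<Rightarrow> 'n bmat \<Rightarrow> 'n bmat" (infixl "\<otimes>\<^sub>B" 70) where
  "A \<otimes>\<^sub>B B = (\<lambda>r c. \<exists>k. A r k \<and> B k c)"

definition bid :: "'n bmat" where
  "bid = (\<lambda>r c. r = c)"

fun bpow :: "'n bmat \<Rightarrow> nat \<Rightarrow> 'n bmat" where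
  "bpow X 0 = bid"
| "bpow X (Suc k) = bpow X k \<otimes>\<^sub>B X"

definition bstar :: "'n bmat \<Rightarrow> 'n bmat" where
  "bstar X = (\<lambda>r c. \<exists>k. bpow X k r c)"

definition Irow :: "'n bmat \<Rightarrow> 'n \<Rightarrow> 'n bmat" where
  "Irow M i = (\<lambda>r c. r = i \<and> M r c)"

definition Jcol :: "'n bmat \<Rightarrow> 'n \<Rightarrow> 'n bmat" where
  "Jcol M i = (\<lambda>r c. c = i \<and> M r c)"

definition i_transitive :: "'n bmat \<Rightarrow> 'n \<Rightarrow> 'n bmat \<Rightarrow> bool" where
  "i_transitive D i X \<longleftrightarrow> Irow D i = Irow D i \<otimes>\<^sub>B X \<and> Jcol D i = X \<otimes>\<^sub>B Jcol D i"

definition i_complete :: "'n bmat \<Rightarrow> 'n \<Rightarrow> 'n bmat \<Rightarrow> bool" where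
  "i_complete D i X \<longleftrightarrow>
     D = (Jcol D i \<otimes>\<^sub>B Irow D i) \<oplus>\<^sub>B (X \<otimes>\<^sub>B Irow D i) \<oplus>\<^sub>B (Jcol D i \<otimes>\<^sub>B X)"

end

theory Submission
  imports Defs
begin

text \<open>Boolean matrices are binary relations on the index type: the Boolean product is
  relational composition, and the Kleene closure is the reflexive transitive closure.
  Hence a matrix with \<open>X = X\<^sup>*\<close> is a preorder, and for a preorder the identity is a
  case analysis on the middle index \<open>k\<close> of \<open>(X + I + J)\<^sup>2\<close>: either both factors are
  entries of \<open>X\<close>, or \<open>k = i\<close> and completeness applies, or one factor is an entry of \<open>X\<close>
  and the other of row or column \<open>i\<close> of \<open>\<Delta>X\<close>, which \<open>i\<close>-transitivity absorbs.\<close>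

lemma btimes_eq_relcompp: "A \<otimes>\<^sub>B B = A OO B"
  by (auto simp: btimes_def fun_eq_iff)

lemma bpow_eq_relpowp: "bpow X k = X ^^ k"
  by (induction k) (simp_all add: bid_def btimes_eq_relcompp)

lemma bstar_eq_rtranclp: "bstar X = X\<^sup>*\<^sup>*"
  by (simp add: bstar_def bpow_eq_relpowp rtranclp_power fun_eq_iff)

lemma reflp_transp_if_bstar_fixed:
  assumes "X = bstar X"
  shows "reflp X" and "transp X"
  by (subst assms, simp add: bstar_eq_rtranclp)+

lemma bpow_two: "bpow M 2 r c \<longleftrightarrow> (\<exists>k. M r k \<and> M k c)"
  by (auto simp: bpow_eq_relpowp numeral_2_eq_2 relpowp_Suc_left)

lemma i_transitive_row:
  assumes "i_transitive D i X" and "D i k" and "X k c"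
  shows "D i c"
proof -
  have "(Irow D i \<otimes>\<^sub>B X) i c"
    using assms(2,3) by (auto simp: Irow_def btimes_def)
  then show ?thesis
    using assms(1) by (simp add: i_transitive_def Irow_def)
qed

lemma i_transitive_col:
  assumes "i_transitive D i X" and "X r k" and "D k i"
  shows "D r i"
proof -
  have "(X \<otimes>\<^sub>B Jcol D i) r i"
    using assms(2,3) by (auto simp: Jcol_def btimes_def)
  then show ?thesis
    using assms(1) by (simp add: i_transitive_def Jcol_def)
qed

lemma i_complete_entry:
  assumes "i_complete D i X"
  shows "D r c \<longleftrightarrow> D r i \<and> D i c \<or> X r i \<and> D i c \<or> D r i \<and> X i c"
proof -
  have "D r c = ((Jcol D i \<otimes>\<^sub>B Irow D i) \<oplus>\<^sub>B (X \<otimes>\<^sub>B Irow D i) \<oplus>\<^sub>B (Jcol D i \<otimes>\<^sub>B X)) r c"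
    using assms unfolding i_complete_def by (rule arg_cong[where f = "\<lambda>M. M r c"])
  then show ?thesis
    by (auto simp: bplus_def btimes_def Irow_def Jcol_def)
qed

lemma preorder_plus_eq_square:
  assumes "reflp X" and "transp X"
    and "i_transitive D i X"
    and "i_complete D i X"
  shows "X \<oplus>\<^sub>B D = bpow (X \<oplus>\<^sub>B Irow D i \<oplus>\<^sub>B Jcol D i) 2"
proof -
  have refl: "X r r" for r
    using assms(1) by (simp add: reflp_def)
  have trans: "X r c" if "X r k" and "X k c" for r k c
    using assms(2) that by (rule transpD)
  note row = i_transitive_row[OF assms(3)]
  note col = i_transitive_col[OF assms(3)]
  note complete = i_complete_entry[OF assms(4)]
  define M where "M = X \<oplus>\<^sub>B Irow D i \<oplus>\<^sub>B Jcol D i"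
  have M: "M r c \<longleftrightarrow> X r c \<or> r = i \<and> D i c \<or> c = i \<and> D r i" for r c
    by (auto simp: M_def bplus_def Irow_def Jcol_def)
  have "X r c \<or> D r c \<longleftrightarrow> (\<exists>k. M r k \<and> M k c)" for r c
  proof
    assume "X r c \<or> D r c"
    then show "\<exists>k. M r k \<and> M k c"
      unfolding M using refl complete[of r c] by blast
  next
    assume "\<exists>k. M r k \<and> M k c"
    then obtain k where "M r k" and "M k c" by blast
    then show "X r c \<or> D r c"
      unfolding M using refl trans row col complete[of r c] by blast
  qed
  then have "X \<oplus>\<^sub>B D = bpow M 2"
    by (simp add: bpow_two bplus_def fun_eq_iff)
  then show ?thesis
    unfolding M_def .
qed

theorem mainTheorem12:
  fixes X D :: "('n::finite) bmat" and i :: 'n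
  assumes "X = bstar X"
    and "i_transitive D i X"
    and "i_complete D i X"
  shows "X \<oplus>\<^sub>B D = bpow (X \<oplus>\<^sub>B Irow D i \<oplus>\<^sub>B Jcol D i) 2"
  using reflp_transp_if_bstar_fixed[OF assms(1)] assms(2,3) by (rule preorder_plus_eq_square)

end
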